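(* Let $f_1,f_2:\mathbb R^d\to\mathbb R$ be convex with $\nabla f_i$ globally Lipschitz continuous with modulus $L_i>0$ ($i=1,2$), let $f_3:\mathbb R^d\to\mathbb R\cup\{+\infty\}$ be proper and lower semicontinuous, and assume $\varphi:=f_1+f_2+f_3$ has a nonempty set of minimizers. Let $\alpha>0$ and $\gamma\in(0,\frac{1}{L_1+L_2})$. Then the relaxed Ryu envelope $\varphi_\gamma^{\mathrm{Ryu}}:\mathbb R^d\times\mathbb R^d\to\mathbb R\cup\{\pm\infty\}$ is real-valued and locally Lipschitz continuous.
   Context: For $h:\mathbb R^d\to\mathbb R\cup\{+\infty\}$ and $\gamma>0$, $\mathrm{prox}_{\gamma h}(z):=\operatorname{argmin}_{y}\{h(y)+\frac{1}{2\gamma}\|y-z\|^2\}$. Set $\gamma_1=\gamma/\alpha$, $\gamma_2=\gamma/(1-\alpha)$, with conventions $\frac{c}{0}=\infty$, $\frac{d}{\infty}=0$ ($c>0,d\in\mathbb R$). For $(z_1,z_2)\in\mathbb R^d\times\mathbb R^d$, let $x_1=\mathrm{prox}_{\gamma f_1}(z_1)$ and $x_2=\mathrm{prox}_{\frac{\gamma}{\alpha}f_2}(\frac{z_2}{\alpha}+x_1)$, and define the relaxed Ryu envelope $$\varphi_\gamma^{\mathrm{Ryu}}(z_1,z_2):=\min_{y\in\mathbb R^d}\Big\{f_3(y)+\sum_{i=1}^2\Big[f_i(x_i)+\langle y-x_i,\nabla f_i(x_i)\rangle+\frac{1}{2\gamma_i}\|y-x_i\|^2\Big]\Big\}.$$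 *)

theory Defs
  imports "HOL-Analysis.Analysis"
begin

definition lsc_ereal :: "('a::topological_space \<Rightarrow> ereal) \<Rightarrow> bool" where
  "lsc_ereal f \<longleftrightarrow> (\<forall>x. \<forall>c. c < f x \<longrightarrow> (\<forall>\<^sub>F y in at x. c < f y))"

definition proper_ereal :: "('a \<Rightarrow> ereal) \<Rightarrow> bool" where
  "proper_ereal f \<longleftrightarrow> (\<forall>x. f x \<noteq> -\<infinity>) \<and> (\<exists>x. f x \<noteq> \<infinity>)"

definition prox :: "real \<Rightarrow> ('a::real_normed_vector \<Rightarrow> real) \<Rightarrow> 'a \<Rightarrow> 'a" where
  "prox \<gamma> h z = (THE x. \<forall>y. h x + (norm (x - z))\<^sup>2 / (2 * \<gamma>) \<le> h y + (norm (y - z))\<^sup>2 / (2 * \<gamma>))"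

text \<open>Relaxed Ryu envelope.  g1, g2 are the gradients of f1, f2.
  The coefficients 1/(2 gamma_1) = alpha/(2 gamma) and 1/(2 gamma_2) = (1-alpha)/(2 gamma)
  are written out (this realizes the conventions c/0 = inf, d/inf = 0).
  The "min" is taken as an infimum in the extended reals.\<close>
definition ryu_envelope ::
  "('a::real_inner \<Rightarrow> real) \<Rightarrow> ('a \<Rightarrow> 'a) \<Rightarrow> ('a \<Rightarrow> real) \<Rightarrow> ('a \<Rightarrow> 'a) \<Rightarrow> ('a \<Rightarrow> ereal)
   \<Rightarrow> real \<Rightarrow> real \<Rightarrow> 'a \<Rightarrow> 'a \<Rightarrow> ereal" where
  "ryu_envelope f1 g1 f2 g2 f3 \<alpha> \<gamma> z1 z2 =
    (let x1 = prox \<gamma> f1 z1;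
         x2 = prox (\<gamma> / \<alpha>) f2 (z2 /\<^sub>R \<alpha> + x1)
     in (INF y. f3 y
           + ereal (f1 x1 + inner (y - x1) (g1 x1) + \<alpha> / (2 * \<gamma>) * (norm (y - x1))\<^sup>2)
           + ereal (f2 x2 + inner (y - x2) (g2 x2) + (1 - \<alpha>) / (2 * \<gamma>) * (norm (y - x2))\<^sup>2)))"

definition locally_lipschitz :: "('a::metric_space \<Rightarrow> 'b::metric_space) \<Rightarrow> bool" where
  "locally_lipschitz F \<longleftrightarrow> (\<forall>z. \<exists>e>0. \<exists>L. L-lipschitz_on (ball z e) F)"

end

theory Submission
  imports Defs
begin

text \<open>
  With \<beta> = 1/(2\<gamma>), the two quadratic models in the Ryu envelope add up to
  W(z) + <y, V(z)> + \<beta>|y|^2, where W and V are built from f1, f2, their gradients and the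
  proximal points x1, x2. Proximal maps of smooth convex functions are nonexpansive, so W and V are
  Lipschitz on bounded sets, and the envelope equals W(z) + e(V(z)) with
  e(v) = inf_y f3(y) + <y, v> + \<beta>|y|^2.
  Since f1 + f2 + f3 attains its minimum and f1, f2 obey the descent lemma, f3 lies above an
  affine function minus ((L1 + L2)/2)|y|^2, and (L1 + L2)/2 < \<beta>. Hence the infimum defining e is
  finite, and for |v| \<le> R only the points y of a fixed ball compete for it; on that ball
  <y, v> is uniformly Lipschitz in v, so e is Lipschitz on bounded sets.
\<close>

section \<open>Differentiable convex functions\<close>

lemma convex_on_gradient_inequality:
  fixes f :: "'a::real_inner \<Rightarrow> real"
  assumes cvx: "convex_on UNIV f"
    and der: "\<And>x. (f has_derivative (\<lambda>h. inner (g x) h)) (at x)"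
  shows "f x + inner (g x) (y - x) \<le> f y"
proof -
  define \<phi> where "\<phi> t = f (x + t *\<^sub>R (y - x))" for t :: real
  have "convex_on UNIV \<phi>"
  proof (rule convex_onI)
    fix s a b :: real assume "0 < s" "s < 1"
    have "x + ((1 - s) * a + s * b) *\<^sub>R (y - x)
        = (1 - s) *\<^sub>R (x + a *\<^sub>R (y - x)) + s *\<^sub>R (x + b *\<^sub>R (y - x))"
      by (simp add: algebra_simps)
    then show "\<phi> ((1 - s) *\<^sub>R a + s *\<^sub>R b) \<le> (1 - s) * \<phi> a + s * \<phi> b"
      unfolding \<phi>_def using convex_onD[OF cvx, of s] \<open>0 < s\<close> \<open>s < 1\<close> by simp
  qed simp
  moreover have "(\<phi> has_field_derivative inner (g x) (y - x)) (at 0)"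
  proof -
    have "((\<lambda>t. x + t *\<^sub>R (y - x)) has_derivative (\<lambda>t. t *\<^sub>R (y - x))) (at 0)"
      by (auto intro!: derivative_eq_intros)
    from has_derivative_compose[OF this der]
    show ?thesis unfolding \<phi>_def by (simp add: has_field_derivative_def mult_commute_abs)
  qed
  ultimately have "inner (g x) (y - x) * (1 - 0) \<le> \<phi> 1 - \<phi> 0"
    by (intro convex_on_imp_above_tangent) auto
  then show ?thesis unfolding \<phi>_def by simp
qed

lemma convex_on_gradient_monotone:
  fixes f :: "'a::real_inner \<Rightarrow> real"
  assumes "convex_on UNIV f"
    and "\<And>x. (f has_derivative (\<lambda>h. inner (g x) h)) (at x)"
  shows "0 \<le> inner (g x - g y) (x - y)"
  using convex_on_gradient_inequality[OF assms, of x y]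
    convex_on_gradient_inequality[OF assms, of y x]
  by (simp add: inner_diff_left inner_diff_right inner_commute)

lemma lipschitz_gradient_quadratic_upper_bound:
  fixes f :: "'a::real_inner \<Rightarrow> real"
  assumes der: "\<And>x. (f has_derivative (\<lambda>h. inner (g x) h)) (at x)"
    and lip: "L-lipschitz_on UNIV g"
  shows "f y \<le> f x + inner (g x) (y - x) + L / 2 * (norm (y - x))\<^sup>2"
proof -
  define d where "d = y - x"
  define \<psi> where "\<psi> t = f (x + t *\<^sub>R d) - t * inner (g x) d - L * t\<^sup>2 / 2 * (norm d)\<^sup>2" for t
  have "\<exists>D. (\<psi> has_real_derivative D) (at t) \<and> D \<le> 0" if "0 \<le> t" for t
  proof -
    have "((\<lambda>t. x + t *\<^sub>R d) has_derivative (\<lambda>s. s *\<^sub>R d)) (at t)"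
      by (auto intro!: derivative_eq_intros)
    from has_derivative_compose[OF this der]
    have Df: "((\<lambda>t. f (x + t *\<^sub>R d)) has_real_derivative inner (g (x + t *\<^sub>R d)) d) (at t)"
      by (simp add: has_field_derivative_def mult_commute_abs)
    have "(\<psi> has_real_derivative
        inner (g (x + t *\<^sub>R d)) d - inner (g x) d - L * t * (norm d)\<^sup>2) (at t)"
      unfolding \<psi>_def by (rule derivative_eq_intros Df refl | simp)+
    moreover have "inner (g (x + t *\<^sub>R d) - g x) d \<le> L * t * (norm d)\<^sup>2"
    proof -
      have "inner (g (x + t *\<^sub>R d) - g x) d \<le> norm (g (x + t *\<^sub>R d) - g x) * norm d"
        by (rule norm_cauchy_schwarz)
      also have "\<dots> \<le> L * norm (t *\<^sub>R d) * norm d"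
        using lipschitz_on_normD[OF lip, of "x + t *\<^sub>R d" x] by (simp add: mult_right_mono)
      finally show ?thesis using \<open>0 \<le> t\<close> by (simp add: power2_eq_square mult.assoc)
    qed
    ultimately show ?thesis by (auto simp: inner_diff_left)
  qed
  then have "\<psi> 1 \<le> \<psi> 0"
    by (rule DERIV_nonpos_imp_nonincreasing[rotated]) auto
  then show ?thesis unfolding \<psi>_def d_def by (simp add: algebra_simps)
qed

lemma convex_on_lipschitz_on_if_gradient_bounded:
  fixes f :: "'a::real_inner \<Rightarrow> real"
  assumes cvx: "convex_on UNIV f"
    and der: "\<And>x. (f has_derivative (\<lambda>h. inner (g x) h)) (at x)"
    and bnd: "\<And>x. x \<in> S \<Longrightarrow> norm (g x) \<le> M" and "0 \<le> M"
  shows "M-lipschitz_on S f"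
proof (rule lipschitz_onI)
  have one_sided: "f x - f y \<le> M * norm (x - y)" if "x \<in> S" for x y
  proof -
    have "f x - f y \<le> inner (g x) (x - y)"
      using convex_on_gradient_inequality[OF cvx der, of x y] by (simp add: inner_diff_right)
    also have "\<dots> \<le> norm (g x) * norm (x - y)" by (rule norm_cauchy_schwarz)
    also have "\<dots> \<le> M * norm (x - y)" using bnd[OF that] by (simp add: mult_right_mono)
    finally show ?thesis .
  qed
  fix x y assume "x \<in> S" "y \<in> S"
  from one_sided[OF \<open>x \<in> S\<close>, of y] one_sided[OF \<open>y \<in> S\<close>, of x]
  show "dist (f x) (f y) \<le> M * dist x y"
    by (simp add: dist_real_def dist_norm norm_minus_commute)
qed fact

section \<open>Lipschitz continuity on bounded sets\<close>

definition lipschitz_on_bounded_sets :: "('a::metric_space \<Rightarrow> 'b::metric_space) \<Rightarrow> bool" where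
  "lipschitz_on_bounded_sets f \<longleftrightarrow> (\<forall>S. bounded S \<longrightarrow> (\<exists>L. L-lipschitz_on S f))"

lemma lipschitz_on_bounded_setsI:
  "(\<And>S. bounded S \<Longrightarrow> \<exists>L. L-lipschitz_on S f) \<Longrightarrow> lipschitz_on_bounded_sets f"
  unfolding lipschitz_on_bounded_sets_def by blast

lemma lipschitz_on_bounded_setsE:
  assumes "lipschitz_on_bounded_sets f" "bounded S"
  obtains L where "L-lipschitz_on S f"
  using assms unfolding lipschitz_on_bounded_sets_def by blast

lemma lipschitz_on_UNIV_imp_lipschitz_on_bounded_sets:
  "L-lipschitz_on UNIV f \<Longrightarrow> lipschitz_on_bounded_sets f"
  using lipschitz_on_subset[of L UNIV f] by (blast intro: lipschitz_on_bounded_setsI)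

lemma bounded_linear_lipschitz_on_bounded_sets:
  "bounded_linear f \<Longrightarrow> lipschitz_on_bounded_sets f"
  by (erule bounded_linear.lipschitz_boundE) (erule lipschitz_on_UNIV_imp_lipschitz_on_bounded_sets)

lemma lipschitz_on_bounded_sets_const: "lipschitz_on_bounded_sets (\<lambda>x. c)"
  by (rule lipschitz_on_UNIV_imp_lipschitz_on_bounded_sets[OF lipschitz_on_constant])

lemma lipschitz_on_bounded_image:
  assumes "L-lipschitz_on S f" "bounded S"
  shows "bounded (f ` S)"
proof (cases "S = {}")
  case False
  then obtain a where "a \<in> S" by blast
  with assms(2) obtain e where "\<And>x. x \<in> S \<Longrightarrow> dist a x \<le> e"
    unfolding bounded_any_center[of _ a] by blast
  then have "\<And>x. x \<in> S \<Longrightarrow> dist (f a) (f x) \<le> L * e"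
    using lipschitz_onD[OF assms(1) \<open>a \<in> S\<close>] mult_left_mono[OF _ lipschitz_on_nonneg[OF assms(1)]]
    by (blast intro: order_trans)
  then show ?thesis unfolding bounded_any_center[of _ "f a"] by blast
qed simp

lemma lipschitz_on_bounded_sets_compose:
  assumes f: "lipschitz_on_bounded_sets f" and g: "lipschitz_on_bounded_sets g"
  shows "lipschitz_on_bounded_sets (\<lambda>x. g (f x))"
proof (rule lipschitz_on_bounded_setsI)
  fix S :: "'a set" assume "bounded S"
  obtain C where C: "C-lipschitz_on S f" using f \<open>bounded S\<close> by (rule lipschitz_on_bounded_setsE)
  obtain D where "D-lipschitz_on (f ` S) g"
    using g lipschitz_on_bounded_image[OF C \<open>bounded S\<close>] by (rule lipschitz_on_bounded_setsE)
  then show "\<exists>L. L-lipschitz_on S (\<lambda>x. g (f x))" using lipschitz_on_compose2[OF C] by blast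
qed

lemma lipschitz_on_bounded_sets_add:
  fixes f g :: "'a::metric_space \<Rightarrow> 'b::real_normed_vector"
  assumes "lipschitz_on_bounded_sets f" "lipschitz_on_bounded_sets g"
  shows "lipschitz_on_bounded_sets (\<lambda>x. f x + g x)"
proof (rule lipschitz_on_bounded_setsI)
  fix S :: "'a set" assume "bounded S"
  with assms obtain C D where "C-lipschitz_on S f" "D-lipschitz_on S g"
    by (meson lipschitz_on_bounded_setsE)
  then show "\<exists>L. L-lipschitz_on S (\<lambda>x. f x + g x)" by (blast intro: lipschitz_on_add)
qed

lemma lipschitz_on_bounded_sets_diff:
  fixes f g :: "'a::metric_space \<Rightarrow> 'b::real_normed_vector"
  assumes "lipschitz_on_bounded_sets f" "lipschitz_on_bounded_sets g"
  shows "lipschitz_on_bounded_sets (\<lambda>x. f x - g x)"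
proof (rule lipschitz_on_bounded_setsI)
  fix S :: "'a set" assume "bounded S"
  with assms obtain C D where "C-lipschitz_on S f" "D-lipschitz_on S g"
    by (meson lipschitz_on_bounded_setsE)
  then show "\<exists>L. L-lipschitz_on S (\<lambda>x. f x - g x)" by (blast intro: lipschitz_on_diff)
qed

lemma (in bounded_bilinear) lipschitz_on_bounded_sets_prod:
  fixes f :: "'d::metric_space \<Rightarrow> 'a" and g :: "'d \<Rightarrow> 'b"
  assumes f: "lipschitz_on_bounded_sets f" and g: "lipschitz_on_bounded_sets g"
  shows "lipschitz_on_bounded_sets (\<lambda>x. prod (f x) (g x))"
proof (rule lipschitz_on_bounded_setsI)
  fix S :: "'d set" assume "bounded S"
  obtain C where C: "C-lipschitz_on S f" using f \<open>bounded S\<close> by (rule lipschitz_on_bounded_setsE)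
  obtain D where D: "D-lipschitz_on S g" using g \<open>bounded S\<close> by (rule lipschitz_on_bounded_setsE)
  obtain Mf where "Mf > 0" and Mf: "\<And>x. x \<in> S \<Longrightarrow> norm (f x) \<le> Mf"
    using lipschitz_on_bounded_image[OF C \<open>bounded S\<close>] unfolding bounded_pos by blast
  obtain Mg where "Mg > 0" and Mg: "\<And>x. x \<in> S \<Longrightarrow> norm (g x) \<le> Mg"
    using lipschitz_on_bounded_image[OF D \<open>bounded S\<close>] unfolding bounded_pos by blast
  obtain K where K: "K > 0" "\<And>a b. norm (prod a b) \<le> norm a * norm b * K"
    using pos_bounded by blast
  have "dist (prod (f x) (g x)) (prod (f y) (g y)) \<le> ((Mf * D + C * Mg) * K) * dist x y"
    if "x \<in> S" "y \<in> S" for x y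
  proof -
    have "prod (f x) (g x) - prod (f y) (g y) = prod (f x) (g x - g y) + prod (f x - f y) (g y)"
      unfolding diff_left diff_right by simp
    then have "dist (prod (f x) (g x)) (prod (f y) (g y))
        \<le> norm (prod (f x) (g x - g y)) + norm (prod (f x - f y) (g y))"
      by (simp add: dist_norm norm_triangle_ineq)
    also have "\<dots> \<le> norm (f x) * dist (g x) (g y) * K + dist (f x) (f y) * norm (g y) * K"
      unfolding dist_norm by (intro add_mono K(2))
    also have "\<dots> \<le> Mf * (D * dist x y) * K + C * dist x y * Mg * K"
      using Mf[OF that(1)] Mg[OF that(2)] lipschitz_onD[OF C that] lipschitz_onD[OF D that]
        lipschitz_on_nonneg[OF C] \<open>K > 0\<close> \<open>Mf > 0\<close>
      by (intro add_mono mult_right_mono mult_mono) auto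
    finally show ?thesis by (simp add: algebra_simps)
  qed
  moreover have "0 \<le> (Mf * D + C * Mg) * K"
    using \<open>Mf > 0\<close> \<open>Mg > 0\<close> lipschitz_on_nonneg[OF C] lipschitz_on_nonneg[OF D] \<open>K > 0\<close>
    by simp
  ultimately have "((Mf * D + C * Mg) * K)-lipschitz_on S (\<lambda>x. prod (f x) (g x))"
    by (intro lipschitz_onI)
  then show "\<exists>L. L-lipschitz_on S (\<lambda>x. prod (f x) (g x))" ..
qed

lemma lipschitz_on_bounded_sets_imp_locally_lipschitz:
  "lipschitz_on_bounded_sets f \<Longrightarrow> locally_lipschitz f"
  unfolding locally_lipschitz_def
proof
  fix z
  assume "lipschitz_on_bounded_sets f"
  then obtain L where "L-lipschitz_on (ball z 1) f"
    using bounded_ball by (rule lipschitz_on_bounded_setsE)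
  then show "\<exists>e>0. \<exists>L. L-lipschitz_on (ball z e) f" using zero_less_one by blast
qed

lemma convex_on_lipschitz_on_bounded_sets:
  fixes f :: "'a::real_inner \<Rightarrow> real"
  assumes cvx: "convex_on UNIV f"
    and der: "\<And>x. (f has_derivative (\<lambda>h. inner (g x) h)) (at x)"
    and g: "lipschitz_on_bounded_sets g"
  shows "lipschitz_on_bounded_sets f"
proof (rule lipschitz_on_bounded_setsI)
  fix S :: "'a set" assume "bounded S"
  obtain L where "L-lipschitz_on S g" using g \<open>bounded S\<close> by (rule lipschitz_on_bounded_setsE)
  from lipschitz_on_bounded_image[OF this \<open>bounded S\<close>]
  obtain M where "M > 0" "\<And>x. x \<in> S \<Longrightarrow> norm (g x) \<le> M" unfolding bounded_pos by blast
  then have "M-lipschitz_on S f"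
    by (intro convex_on_lipschitz_on_if_gradient_bounded[OF cvx der]) auto
  then show "\<exists>L. L-lipschitz_on S f" ..
qed

section \<open>The proximal map of a smooth convex function\<close>

lemma quadratic_dominates_linear:
  fixes \<delta> P Q :: real
  assumes "\<delta> > 0"
  obtains r where "\<And>t. r \<le> t \<Longrightarrow> Q \<le> \<delta> * t\<^sup>2 - P * t"
proof
  fix t assume "max 1 ((\<bar>P\<bar> + \<bar>Q\<bar>) / \<delta>) \<le> t"
  then have "1 \<le> t" and "\<bar>P\<bar> + \<bar>Q\<bar> \<le> \<delta> * t"
    using \<open>\<delta> > 0\<close> by (auto simp: field_simps)
  then have "\<bar>Q\<bar> \<le> \<delta> * t - P" by linarith
  also have "\<dots> \<le> t * (\<delta> * t - P)"
    using mult_right_mono[OF \<open>1 \<le> t\<close>, of "\<delta> * t - P"] \<open>\<bar>Q\<bar> \<le> \<delta> * t - P\<close> by simp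
  finally have "\<bar>Q\<bar> \<le> t * (\<delta> * t - P)" .
  then show "Q \<le> \<delta> * t\<^sup>2 - P * t"
    by (simp add: power2_eq_square algebra_simps)
qed

lemma continuous_attains_inf_if_coercive:
  fixes \<phi> :: "'a::euclidean_space \<Rightarrow> real"
  assumes cont: "continuous_on UNIV \<phi>" and coercive: "\<And>y. r \<le> norm y \<Longrightarrow> \<phi> a \<le> \<phi> y"
  shows "\<exists>p. \<forall>y. \<phi> p \<le> \<phi> y"
proof -
  define R where "R = max r (norm a)"
  have "continuous_on (cball 0 R) \<phi>" using cont by (rule continuous_on_subset) simp
  moreover have "cball 0 R \<noteq> {}" unfolding R_def by simp
  ultimately obtain p where p: "\<And>y. y \<in> cball 0 R \<Longrightarrow> \<phi> p \<le> \<phi> y"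
    using continuous_attains_inf[OF compact_cball] by blast
  have "\<phi> p \<le> \<phi> y" for y
  proof (cases "norm y \<le> R")
    case False
    then have "\<phi> a \<le> \<phi> y" using coercive unfolding R_def by simp
    moreover have "\<phi> p \<le> \<phi> a" using p unfolding R_def by simp
    ultimately show ?thesis by simp
  qed (simp add: p)
  then show ?thesis by blast
qed

lemma prox_objective_has_minimizer:
  fixes f :: "'a::euclidean_space \<Rightarrow> real"
  assumes cvx: "convex_on UNIV f"
    and der: "\<And>x. (f has_derivative (\<lambda>h. inner (g x) h)) (at x)"
    and "\<gamma> > 0"
  obtains p where "\<And>y. f p + (norm (p - z))\<^sup>2 / (2 * \<gamma>) \<le> f y + (norm (y - z))\<^sup>2 / (2 * \<gamma>)"
proof -
  define \<beta> where "\<beta> = 1 / (2 * \<gamma>)"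
  have "\<beta> > 0" unfolding \<beta>_def using \<open>\<gamma> > 0\<close> by simp
  define \<phi> where "\<phi> y = f y + \<beta> * (norm (y - z))\<^sup>2" for y
  have "continuous_on UNIV f"
    using der has_derivative_continuous continuous_at_imp_continuous_on by blast
  then have "continuous_on UNIV \<phi>"
    unfolding \<phi>_def by (intro continuous_intros) auto
  moreover obtain r where r: "\<And>t. r \<le> t \<Longrightarrow> 0 \<le> \<beta> * t\<^sup>2 - (norm (g 0) + 2 * \<beta> * norm z) * t"
    using quadratic_dominates_linear[OF \<open>\<beta> > 0\<close>] by blast
  have "\<phi> 0 \<le> \<phi> y" if "r \<le> norm y" for y
  proof -
    have "f 0 - norm (g 0) * norm y \<le> f y"
      using convex_on_gradient_inequality[OF cvx der, of 0 y] norm_cauchy_schwarz[of "g 0" "- y"]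
      by simp
    moreover have "(norm y)\<^sup>2 - 2 * (norm y * norm z) + (norm z)\<^sup>2 \<le> (norm (y - z))\<^sup>2"
    proof -
      have "(norm (y - z))\<^sup>2 = (norm y)\<^sup>2 - 2 * inner y z + (norm z)\<^sup>2"
        by (simp add: power2_norm_eq_inner inner_diff_left inner_diff_right inner_commute)
      with norm_cauchy_schwarz[of y z] show ?thesis by linarith
    qed
    then have "\<beta> * ((norm y)\<^sup>2 - 2 * (norm y * norm z) + (norm z)\<^sup>2) \<le> \<beta> * (norm (y - z))\<^sup>2"
      using \<open>\<beta> > 0\<close> by (intro mult_left_mono) auto
    ultimately have "\<phi> 0 + (\<beta> * (norm y)\<^sup>2 - (norm (g 0) + 2 * \<beta> * norm z) * norm y) \<le> \<phi> y"
      unfolding \<phi>_def by (simp add: algebra_simps)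
    with r[OF that] show ?thesis by linarith
  qed
  ultimately have "\<exists>p. \<forall>y. \<phi> p \<le> \<phi> y" by (rule continuous_attains_inf_if_coercive)
  then obtain p where "\<And>y. \<phi> p \<le> \<phi> y" by blast
  then have "\<And>y. f p + (norm (p - z))\<^sup>2 / (2 * \<gamma>) \<le> f y + (norm (y - z))\<^sup>2 / (2 * \<gamma>)"
    unfolding \<phi>_def \<beta>_def by simp
  then show ?thesis by (rule that)
qed

lemma prox_objective_minimizer_stationary:
  fixes f :: "'a::real_inner \<Rightarrow> real"
  assumes der: "\<And>x. (f has_derivative (\<lambda>h. inner (g x) h)) (at x)"
    and "\<gamma> > 0"
    and min: "\<And>y. f p + (norm (p - z))\<^sup>2 / (2 * \<gamma>) \<le> f y + (norm (y - z))\<^sup>2 / (2 * \<gamma>)"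
  shows "p + \<gamma> *\<^sub>R g p = z"
proof -
  define c where "c = 1 / (2 * \<gamma>)"
  define w where "w = g p + (1 / \<gamma>) *\<^sub>R (p - z)"
  have "((\<lambda>y. f y + c * inner (y - z) (y - z)) has_derivative
      (\<lambda>h. inner (g p) h + c * (inner h (p - z) + inner (p - z) h))) (at p)"
    by (auto intro!: derivative_eq_intros der)
  moreover have "\<forall>\<^sub>F y in at p. f p + c * inner (p - z) (p - z) \<le> f y + c * inner (y - z) (y - z)"
    using min by (simp add: power2_norm_eq_inner c_def)
  ultimately have "(\<lambda>h. inner (g p) h + c * (inner h (p - z) + inner (p - z) h)) = (\<lambda>h. 0)"
    by (rule has_derivative_local_min)
  then have "inner (g p) w + c * (inner w (p - z) + inner (p - z) w) = 0"
    by metis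
  then have "inner w (g p) + (1 / \<gamma>) * inner w (p - z) = 0"
    unfolding c_def by (simp add: inner_commute)
  moreover have "inner w w = inner w (g p) + (1 / \<gamma>) * inner w (p - z)"
    by (subst (2) w_def) (simp add: inner_add_right)
  ultimately have "inner w w = 0" by simp
  then have "\<gamma> *\<^sub>R w = 0" by simp
  then show ?thesis
    unfolding w_def using \<open>\<gamma> > 0\<close> by (simp add: scaleR_add_right algebra_simps)
qed

lemma gradient_resolvent_nonexpansive:
  fixes f :: "'a::real_inner \<Rightarrow> real"
  assumes cvx: "convex_on UNIV f"
    and der: "\<And>x. (f has_derivative (\<lambda>h. inner (g x) h)) (at x)"
    and "\<gamma> > 0" and p: "p + \<gamma> *\<^sub>R g p = z" and q: "q + \<gamma> *\<^sub>R g q = z'"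
  shows "norm (p - q) \<le> norm (z - z')"
proof -
  have "(norm (p - q))\<^sup>2 \<le> inner (p - q) (p - q) + \<gamma> * inner (g p - g q) (p - q)"
    using convex_on_gradient_monotone[OF cvx der, of p q] \<open>\<gamma> > 0\<close>
    by (simp add: power2_norm_eq_inner)
  also have "\<dots> = inner (z - z') (p - q)"
    using p q by (auto simp: algebra_simps inner_diff_left inner_diff_right inner_add_left)
  also have "\<dots> \<le> norm (z - z') * norm (p - q)" by (rule norm_cauchy_schwarz)
  finally show ?thesis
    by (cases "p = q") (auto simp: power2_eq_square)
qed

lemma prox_gradient_eq:
  fixes f :: "'a::euclidean_space \<Rightarrow> real"
  assumes cvx: "convex_on UNIV f"
    and der: "\<And>x. (f has_derivative (\<lambda>h. inner (g x) h)) (at x)"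
    and "\<gamma> > 0"
  shows "prox \<gamma> f z + \<gamma> *\<^sub>R g (prox \<gamma> f z) = z"
proof -
  obtain p where p: "\<And>y. f p + (norm (p - z))\<^sup>2 / (2 * \<gamma>) \<le> f y + (norm (y - z))\<^sup>2 / (2 * \<gamma>)"
    using prox_objective_has_minimizer[OF cvx der \<open>\<gamma> > 0\<close>] by blast
  note stationary = prox_objective_minimizer_stationary[OF der \<open>\<gamma> > 0\<close>]
  have "prox \<gamma> f z = p"
    unfolding prox_def
  proof (rule the_equality)
    fix x
    assume "\<forall>y. f x + (norm (x - z))\<^sup>2 / (2 * \<gamma>) \<le> f y + (norm (y - z))\<^sup>2 / (2 * \<gamma>)"
    then have "x + \<gamma> *\<^sub>R g x = z" by (intro stationary) blast
    then have "norm (x - p) \<le> norm (z - z)"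
      by (rule gradient_resolvent_nonexpansive[OF cvx der \<open>\<gamma> > 0\<close> _ stationary[OF p]])
    then show "x = p" by simp
  qed (use p in blast)
  then show ?thesis using stationary[OF p] by simp
qed

lemma prox_nonexpansive:
  fixes f :: "'a::euclidean_space \<Rightarrow> real"
  assumes "convex_on UNIV f"
    and "\<And>x. (f has_derivative (\<lambda>h. inner (g x) h)) (at x)"
    and "\<gamma> > 0"
  shows "norm (prox \<gamma> f z - prox \<gamma> f z') \<le> norm (z - z')"
  by (rule gradient_resolvent_nonexpansive[OF assms prox_gradient_eq[OF assms]
        prox_gradient_eq[OF assms]])

lemma lipschitz_on_bounded_sets_prox:
  fixes f :: "'a::euclidean_space \<Rightarrow> real"
  assumes "convex_on UNIV f"
    and "\<And>x. (f has_derivative (\<lambda>h. inner (g x) h)) (at x)"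
    and "\<gamma> > 0"
  shows "lipschitz_on_bounded_sets (prox \<gamma> f)"
  using prox_nonexpansive[OF assms]
  by (intro lipschitz_on_UNIV_imp_lipschitz_on_bounded_sets[of 1] lipschitz_onI)
    (auto simp: dist_norm)

section \<open>Quadratic envelopes\<close>

lemma quadratic_ge_neg_square:
  fixes \<delta> P t :: real
  assumes "\<delta> > 0"
  shows "- (P\<^sup>2 / (4 * \<delta>)) \<le> \<delta> * t\<^sup>2 - P * t"
proof -
  have "\<delta> * t\<^sup>2 - P * t + P\<^sup>2 / (4 * \<delta>) = (2 * \<delta> * t - P)\<^sup>2 / (4 * \<delta>)"
    using assms by (simp add: field_simps power2_eq_square)
  also have "\<dots> \<ge> 0" using assms by simp
  finally show ?thesis by simp
qed

definition quadratic_envelope :: "('a::real_inner \<Rightarrow> ereal) \<Rightarrow> real \<Rightarrow> 'a \<Rightarrow> ereal" where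
  "quadratic_envelope h \<beta> v = (INF y. h y + ereal (inner y v + \<beta> * (norm y)\<^sup>2))"

lemma quadratic_envelope_le:
  "quadratic_envelope h \<beta> v \<le> h y + ereal (inner y v + \<beta> * (norm y)\<^sup>2)"
  unfolding quadratic_envelope_def by (rule INF_lower) simp

lemma quadratic_envelope_objective_ge:
  fixes h :: "'a::real_inner \<Rightarrow> ereal" and u v y :: 'a
  assumes minorant: "\<And>y. ereal (c + inner u y - K * (norm y)\<^sup>2) \<le> h y"
  shows "ereal (c + ((\<beta> - K) * (norm y)\<^sup>2 - norm (u + v) * norm y))
    \<le> h y + ereal (inner y v + \<beta> * (norm y)\<^sup>2)"
proof -
  have "- (norm (u + v) * norm y) \<le> inner (u + v) y"
    using norm_cauchy_schwarz[of "u + v" "- y"] by simp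
  then have "c + ((\<beta> - K) * (norm y)\<^sup>2 - norm (u + v) * norm y)
      \<le> (c + inner u y - K * (norm y)\<^sup>2) + (inner y v + \<beta> * (norm y)\<^sup>2)"
    by (simp add: algebra_simps inner_commute inner_add_left)
  also have "ereal \<dots> \<le> h y + ereal (inner y v + \<beta> * (norm y)\<^sup>2)"
    unfolding plus_ereal.simps(1)[symmetric] by (intro add_right_mono minorant)
  finally show ?thesis by simp
qed

lemma quadratic_envelope_finite:
  fixes h :: "'a::real_inner \<Rightarrow> ereal"
  assumes minorant: "\<And>y. ereal (c + inner u y - K * (norm y)\<^sup>2) \<le> h y"
    and "h y0 \<noteq> \<infinity>" and "K < \<beta>"
  shows "\<bar>quadratic_envelope h \<beta> v\<bar> \<noteq> \<infinity>"
proof -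
  have "h y0 \<noteq> -\<infinity>" using minorant[of y0] by auto
  then have "quadratic_envelope h \<beta> v \<noteq> \<infinity>"
    using quadratic_envelope_le[of h \<beta> v y0] \<open>h y0 \<noteq> \<infinity>\<close> by auto
  moreover have "ereal (c - (norm (u + v))\<^sup>2 / (4 * (\<beta> - K))) \<le> quadratic_envelope h \<beta> v"
    unfolding quadratic_envelope_def
  proof (rule INF_greatest)
    fix y :: 'a
    have "c - (norm (u + v))\<^sup>2 / (4 * (\<beta> - K))
        \<le> c + ((\<beta> - K) * (norm y)\<^sup>2 - norm (u + v) * norm y)"
      using quadratic_ge_neg_square[of "\<beta> - K"] \<open>K < \<beta>\<close> by simp
    then have "ereal (c - (norm (u + v))\<^sup>2 / (4 * (\<beta> - K)))
        \<le> ereal (c + ((\<beta> - K) * (norm y)\<^sup>2 - norm (u + v) * norm y))" by simp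
    also have "\<dots> \<le> h y + ereal (inner y v + \<beta> * (norm y)\<^sup>2)"
      by (rule quadratic_envelope_objective_ge[OF minorant])
    finally show "ereal (c - (norm (u + v))\<^sup>2 / (4 * (\<beta> - K)))
        \<le> h y + ereal (inner y v + \<beta> * (norm y)\<^sup>2)" .
  qed
  ultimately show ?thesis by auto
qed

lemma quadratic_envelope_lipschitz_bound:
  fixes h :: "'a::real_inner \<Rightarrow> ereal"
  assumes minorant: "\<And>y. ereal (c + inner u y - K * (norm y)\<^sup>2) \<le> h y"
    and y0: "h y0 \<noteq> \<infinity>" and "K < \<beta>"
  obtains \<rho> where "\<rho> \<ge> 0" and "\<And>v v'. norm v \<le> R \<Longrightarrow> norm v' \<le> R \<Longrightarrow>
    quadratic_envelope h \<beta> v \<le> quadratic_envelope h \<beta> v' + ereal (\<rho> * norm (v - v'))"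
proof -
  obtain r0 where r0: "h y0 = ereal r0" using y0 minorant[of y0] by (cases "h y0") auto
  define U where "U = r0 + norm y0 * R + \<beta> * (norm y0)\<^sup>2"
  have env_le_U: "quadratic_envelope h \<beta> v \<le> ereal U" if "norm v \<le> R" for v
  proof -
    have "inner y0 v \<le> norm y0 * R"
      using norm_cauchy_schwarz[of y0 v] mult_left_mono[OF that norm_ge_zero[of y0]] by linarith
    then have "r0 + (inner y0 v + \<beta> * (norm y0)\<^sup>2) \<le> U" unfolding U_def by linarith
    then show ?thesis using quadratic_envelope_le[of h \<beta> v y0] r0 by (simp add: order_trans)
  qed
  obtain r where r: "\<And>t. r \<le> t \<Longrightarrow> U - c \<le> (\<beta> - K) * t\<^sup>2 - (norm u + R) * t"
    using quadratic_dominates_linear \<open>K < \<beta>\<close> by (metis diff_gt_0_iff_gt)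
  \<comment> \<open>Outside the ball of radius \<rho> the objective exceeds the bound U on the envelope;
    inside it, changing v to v' moves the objective by at most \<rho> |v - v'|.\<close>
  define \<rho> where "\<rho> = max 0 r"
  have pointwise: "quadratic_envelope h \<beta> v
      \<le> h y + ereal (inner y v' + \<beta> * (norm y)\<^sup>2) + ereal (\<rho> * norm (v - v'))"
    if "norm v \<le> R" "norm v' \<le> R" for v v' y
  proof (cases "norm y \<le> \<rho>")
    case True
    have "inner y v \<le> inner y v' + \<rho> * norm (v - v')"
    proof -
      have "inner y (v - v') \<le> norm y * norm (v - v')" by (rule norm_cauchy_schwarz)
      also have "\<dots> \<le> \<rho> * norm (v - v')" using True by (simp add: mult_right_mono)
      finally show ?thesis by (simp add: inner_diff_right)
    qed
    then have "h y + ereal (inner y v + \<beta> * (norm y)\<^sup>2)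
        \<le> h y + ereal (inner y v' + \<beta> * (norm y)\<^sup>2 + \<rho> * norm (v - v'))"
      by (intro add_left_mono) simp
    with quadratic_envelope_le[of h \<beta> v y] show ?thesis by (simp add: add.assoc)
  next
    case False
    have "norm (u + v') \<le> norm u + R" using norm_triangle_ineq[of u v'] that(2) by linarith
    moreover have "r \<le> norm y" using False unfolding \<rho>_def by simp
    ultimately have "U \<le> c + ((\<beta> - K) * (norm y)\<^sup>2 - norm (u + v') * norm y)"
      using r[of "norm y"] mult_right_mono[of "norm (u + v')" "norm u + R" "norm y"] by simp
    then have "ereal U \<le> ereal (c + ((\<beta> - K) * (norm y)\<^sup>2 - norm (u + v') * norm y))" by simp
    also have "\<dots> \<le> h y + ereal (inner y v' + \<beta> * (norm y)\<^sup>2)"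
      by (rule quadratic_envelope_objective_ge[OF minorant])
    finally have "ereal U \<le> h y + ereal (inner y v' + \<beta> * (norm y)\<^sup>2)" .
    moreover have "0 \<le> \<rho> * norm (v - v')" unfolding \<rho>_def by simp
    ultimately show ?thesis
      using env_le_U[OF that(1)] by (metis add_mono add.right_neutral order_trans ereal_less_eq(5))
  qed
  show ?thesis
  proof (rule that)
    show "0 \<le> \<rho>" unfolding \<rho>_def by simp
    fix v v' :: 'a assume "norm v \<le> R" "norm v' \<le> R"
    have fin: "\<bar>quadratic_envelope h \<beta> v\<bar> \<noteq> \<infinity>"
      by (rule quadratic_envelope_finite[OF minorant y0 \<open>K < \<beta>\<close>])
    have "quadratic_envelope h \<beta> v - ereal (\<rho> * norm (v - v')) \<le> quadratic_envelope h \<beta> v'"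
      unfolding quadratic_envelope_def[of h \<beta> v']
    proof (rule INF_greatest)
      fix y
      show "quadratic_envelope h \<beta> v - ereal (\<rho> * norm (v - v'))
          \<le> h y + ereal (inner y v' + \<beta> * (norm y)\<^sup>2)"
        using pointwise[OF \<open>norm v \<le> R\<close> \<open>norm v' \<le> R\<close>, of y] by (simp add: ereal_minus_le)
    qed
    then show "quadratic_envelope h \<beta> v \<le> quadratic_envelope h \<beta> v' + ereal (\<rho> * norm (v - v'))"
      by (simp add: ereal_minus_le_iff)
  qed
qed

lemma lipschitz_on_bounded_sets_quadratic_envelope:
  fixes h :: "'a::real_inner \<Rightarrow> ereal"
  assumes minorant: "\<And>y. ereal (c + inner u y - K * (norm y)\<^sup>2) \<le> h y"
    and y0: "h y0 \<noteq> \<infinity>" and "K < \<beta>"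
  shows "lipschitz_on_bounded_sets (\<lambda>v. real_of_ereal (quadratic_envelope h \<beta> v))"
proof (rule lipschitz_on_bounded_setsI)
  fix S :: "'a set" assume "bounded S"
  then obtain R where R: "\<And>v. v \<in> S \<Longrightarrow> norm v \<le> R" unfolding bounded_iff by blast
  obtain \<rho> where "\<rho> \<ge> 0" and shift: "\<And>v v'. norm v \<le> R \<Longrightarrow> norm v' \<le> R \<Longrightarrow>
      quadratic_envelope h \<beta> v \<le> quadratic_envelope h \<beta> v' + ereal (\<rho> * norm (v - v'))"
    using quadratic_envelope_lipschitz_bound[OF minorant y0 \<open>K < \<beta>\<close>] by blast
  have real_shift: "real_of_ereal (quadratic_envelope h \<beta> v)
      \<le> real_of_ereal (quadratic_envelope h \<beta> v') + \<rho> * dist v v'" if "v \<in> S" "v' \<in> S" for v v'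
  proof -
    note fin = quadratic_envelope_finite[OF minorant y0 \<open>K < \<beta>\<close>]
    from fin[of v] fin[of v'] shift[OF R[OF that(1)] R[OF that(2)]] show ?thesis
      by (cases "quadratic_envelope h \<beta> v"; cases "quadratic_envelope h \<beta> v'")
        (auto simp: dist_norm)
  qed
  have "\<rho>-lipschitz_on S (\<lambda>v. real_of_ereal (quadratic_envelope h \<beta> v))"
  proof (rule lipschitz_onI)
    fix v v' assume "v \<in> S" "v' \<in> S"
    from real_shift[OF this] real_shift[OF \<open>v' \<in> S\<close> \<open>v \<in> S\<close>]
    show "dist (real_of_ereal (quadratic_envelope h \<beta> v))
        (real_of_ereal (quadratic_envelope h \<beta> v'))
        \<le> \<rho> * dist v v'"
      by (simp add: dist_real_def dist_commute abs_le_iff)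
  qed fact
  then show "\<exists>L. L-lipschitz_on S (\<lambda>v. real_of_ereal (quadratic_envelope h \<beta> v))" ..
qed

section \<open>The relaxed Ryu envelope\<close>

lemma INF_ereal_add_left_real:
  fixes f :: "'i \<Rightarrow> ereal"
  shows "(INF i\<in>I. f i + ereal c) = (INF i\<in>I. f i) + ereal c"
proof (rule antisym)
  have "(INF i\<in>I. f i + ereal c) + ereal (- c) \<le> f i" if "i \<in> I" for i
  proof -
    have "(INF i\<in>I. f i + ereal c) + ereal (- c) \<le> f i + ereal c + ereal (- c)"
      using that by (intro add_right_mono INF_lower)
    then show ?thesis by (simp add: add.assoc)
  qed
  then have "(INF i\<in>I. f i + ereal c) + ereal (- c) + ereal c \<le> (INF i\<in>I. f i) + ereal c"
    by (intro add_right_mono INF_greatest)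
  then show "(INF i\<in>I. f i + ereal c) \<le> (INF i\<in>I. f i) + ereal c"
    by (simp add: add.assoc)
  show "(INF i\<in>I. f i) + ereal c \<le> (INF i\<in>I. f i + ereal c)"
    by (intro INF_greatest add_right_mono INF_lower)
qed

lemma sum_of_quadratic_models_eq:
  fixes x1 x2 y d1 d2 :: "'a::real_inner"
  shows "(a1 + inner (y - x1) d1 + c1 * (norm (y - x1))\<^sup>2)
      + (a2 + inner (y - x2) d2 + c2 * (norm (y - x2))\<^sup>2)
    = (a1 - inner x1 d1 + c1 * inner x1 x1 + a2 - inner x2 d2 + c2 * inner x2 x2)
      + inner y (d1 + d2 - (2 * c1) *\<^sub>R x1 - (2 * c2) *\<^sub>R x2) + (c1 + c2) * (norm y)\<^sup>2"
  by (simp add: power2_norm_eq_inner inner_diff_left inner_diff_right inner_add_right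
      inner_commute algebra_simps)

lemma ryu_envelope_decomposition:
  fixes f1 f2 :: "'a::euclidean_space \<Rightarrow> real"
    and g1 g2 :: "'a \<Rightarrow> 'a"
    and f3 :: "'a \<Rightarrow> ereal"
  assumes cvx1: "convex_on UNIV f1" and cvx2: "convex_on UNIV f2"
    and der1: "\<And>x. (f1 has_derivative (\<lambda>h. inner (g1 x) h)) (at x)"
    and der2: "\<And>x. (f2 has_derivative (\<lambda>h. inner (g2 x) h)) (at x)"
    and lip1: "L1-lipschitz_on UNIV g1" and lip2: "L2-lipschitz_on UNIV g2"
    and "\<alpha> > 0" and "\<gamma> > 0"
  obtains W :: "'a \<times> 'a \<Rightarrow> real" and V :: "'a \<times> 'a \<Rightarrow> 'a"
  where "lipschitz_on_bounded_sets W" and "lipschitz_on_bounded_sets V"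
    and "\<And>z1 z2. ryu_envelope f1 g1 f2 g2 f3 \<alpha> \<gamma> z1 z2
      = ereal (W (z1, z2)) + quadratic_envelope f3 (1 / (2 * \<gamma>)) (V (z1, z2))"
proof
  define c1 c2 where "c1 = \<alpha> / (2 * \<gamma>)" and "c2 = (1 - \<alpha>) / (2 * \<gamma>)"
  define X1 where "X1 w = prox \<gamma> f1 (fst w)" for w :: "'a \<times> 'a"
  define X2 where "X2 w = prox (\<gamma> / \<alpha>) f2 (snd w /\<^sub>R \<alpha> + X1 w)" for w
  define W where "W w = f1 (X1 w) - inner (X1 w) (g1 (X1 w)) + c1 * inner (X1 w) (X1 w)
    + f2 (X2 w) - inner (X2 w) (g2 (X2 w)) + c2 * inner (X2 w) (X2 w)" for w
  define V where "V w = g1 (X1 w) + g2 (X2 w) - (2 * c1) *\<^sub>R X1 w - (2 * c2) *\<^sub>R X2 w" for w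
  show "ryu_envelope f1 g1 f2 g2 f3 \<alpha> \<gamma> z1 z2
      = ereal (W (z1, z2)) + quadratic_envelope f3 (1 / (2 * \<gamma>)) (V (z1, z2))" for z1 z2
  proof -
    have "c1 + c2 = 1 / (2 * \<gamma>)" unfolding c1_def c2_def add_divide_distrib[symmetric] by simp
    have "(f1 (X1 w) + inner (y - X1 w) (g1 (X1 w)) + c1 * (norm (y - X1 w))\<^sup>2)
        + (f2 (X2 w) + inner (y - X2 w) (g2 (X2 w)) + c2 * (norm (y - X2 w))\<^sup>2)
        = (inner y (V w) + 1 / (2 * \<gamma>) * (norm y)\<^sup>2) + W w" for y w
      unfolding sum_of_quadratic_models_eq \<open>c1 + c2 = 1 / (2 * \<gamma>)\<close> W_def V_def by simp
    then have pointwise: "f3 y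
          + ereal (f1 (X1 w) + inner (y - X1 w) (g1 (X1 w)) + c1 * (norm (y - X1 w))\<^sup>2)
          + ereal (f2 (X2 w) + inner (y - X2 w) (g2 (X2 w)) + c2 * (norm (y - X2 w))\<^sup>2)
        = f3 y + ereal (inner y (V w) + 1 / (2 * \<gamma>) * (norm y)\<^sup>2) + ereal (W w)" for y w
      by (simp add: add.assoc)
    have "(INF y. f3 y
          + ereal (f1 (X1 w) + inner (y - X1 w) (g1 (X1 w)) + c1 * (norm (y - X1 w))\<^sup>2)
          + ereal (f2 (X2 w) + inner (y - X2 w) (g2 (X2 w)) + c2 * (norm (y - X2 w))\<^sup>2))
        = ereal (W w) + quadratic_envelope f3 (1 / (2 * \<gamma>)) (V w)" for w
      unfolding pointwise INF_ereal_add_left_real quadratic_envelope_def by (rule add.commute)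
    from this[of "(z1, z2)"] show ?thesis
      unfolding ryu_envelope_def X1_def X2_def c1_def c2_def Let_def by simp
  qed
  have lip_X1: "lipschitz_on_bounded_sets X1"
    unfolding X1_def
    by (rule lipschitz_on_bounded_sets_compose[OF
          bounded_linear_lipschitz_on_bounded_sets[OF bounded_linear_fst]
          lipschitz_on_bounded_sets_prox[OF cvx1 der1 \<open>\<gamma> > 0\<close>]])
  have "lipschitz_on_bounded_sets (\<lambda>w. snd w /\<^sub>R \<alpha> + X1 w)"
    by (rule lipschitz_on_bounded_sets_add[OF bounded_linear_lipschitz_on_bounded_sets lip_X1])
      (rule bounded_linear_compose[OF bounded_linear_scaleR_right bounded_linear_snd])
  then have lip_X2: "lipschitz_on_bounded_sets X2"
    unfolding X2_def using \<open>\<alpha> > 0\<close> \<open>\<gamma> > 0\<close>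
    by (intro lipschitz_on_bounded_sets_compose[OF _ lipschitz_on_bounded_sets_prox[OF cvx2 der2]])
      auto
  have lip_g: "lipschitz_on_bounded_sets g1" "lipschitz_on_bounded_sets g2"
    using lip1 lip2 by (auto intro: lipschitz_on_UNIV_imp_lipschitz_on_bounded_sets)
  have lip_f: "lipschitz_on_bounded_sets f1" "lipschitz_on_bounded_sets f2"
    using convex_on_lipschitz_on_bounded_sets cvx1 der1 cvx2 der2 lip_g by blast+
  have lip_comp: "lipschitz_on_bounded_sets (\<lambda>w. f1 (X1 w))" "lipschitz_on_bounded_sets (\<lambda>w. g1 (X1 w))"
    "lipschitz_on_bounded_sets (\<lambda>w. f2 (X2 w))" "lipschitz_on_bounded_sets (\<lambda>w. g2 (X2 w))"
    by (rule lipschitz_on_bounded_sets_compose[OF lip_X1 lip_f(1)]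
        lipschitz_on_bounded_sets_compose[OF lip_X1 lip_g(1)]
        lipschitz_on_bounded_sets_compose[OF lip_X2 lip_f(2)]
        lipschitz_on_bounded_sets_compose[OF lip_X2 lip_g(2)])+
  note intros = lipschitz_on_bounded_sets_add lipschitz_on_bounded_sets_diff
    lipschitz_on_bounded_sets_const
    bounded_bilinear.lipschitz_on_bounded_sets_prod[OF bounded_bilinear_inner]
    bounded_bilinear.lipschitz_on_bounded_sets_prod[OF bounded_bilinear_mult]
    bounded_bilinear.lipschitz_on_bounded_sets_prod[OF bounded_bilinear_scaleR]
  show "lipschitz_on_bounded_sets W"
    unfolding W_def by (intro intros lip_X1 lip_X2 lip_comp)
  show "lipschitz_on_bounded_sets V"
    unfolding V_def by (intro intros lip_X1 lip_X2 lip_comp)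
qed

lemma sum_minimizer_quadratic_minorant:
  fixes f1 f2 :: "'a::real_inner \<Rightarrow> real" and f3 :: "'a \<Rightarrow> ereal"
  assumes der1: "\<And>x. (f1 has_derivative (\<lambda>h. inner (g1 x) h)) (at x)"
    and der2: "\<And>x. (f2 has_derivative (\<lambda>h. inner (g2 x) h)) (at x)"
    and lip1: "L1-lipschitz_on UNIV g1" and lip2: "L2-lipschitz_on UNIV g2"
    and "proper_ereal f3"
    and min: "\<And>y. ereal (f1 x) + ereal (f2 x) + f3 x \<le> ereal (f1 y) + ereal (f2 y) + f3 y"
  obtains c u where "\<And>y. ereal (c + inner u y - (L1 + L2) / 2 * (norm y)\<^sup>2) \<le> f3 y"
proof -
  have ninf: "f3 y \<noteq> -\<infinity>" for y using \<open>proper_ereal f3\<close> unfolding proper_ereal_def by blast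
  obtain y0 where "f3 y0 \<noteq> \<infinity>" using \<open>proper_ereal f3\<close> unfolding proper_ereal_def by blast
  then obtain m where m: "f3 x = ereal m"
    using min[of y0] ninf[of x] ninf[of y0] by (cases "f3 x"; cases "f3 y0") auto
  define c where "c = f1 x + f2 x + m - f1 0 - f2 0"
  have "ereal (c + inner (- (g1 0 + g2 0)) y - (L1 + L2) / 2 * (norm y)\<^sup>2) \<le> f3 y" for y
  proof (cases "f3 y")
    case (real r)
    have "f1 x + f2 x + m \<le> f1 y + f2 y + r" using min[of y] m real by simp
    moreover have "f1 y \<le> f1 0 + inner (g1 0) y + L1 / 2 * (norm y)\<^sup>2"
      using lipschitz_gradient_quadratic_upper_bound[OF der1 lip1, of y 0] by simp
    moreover have "f2 y \<le> f2 0 + inner (g2 0) y + L2 / 2 * (norm y)\<^sup>2"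
      using lipschitz_gradient_quadratic_upper_bound[OF der2 lip2, of y 0] by simp
    ultimately have "f1 x + f2 x + m - (f1 0 + inner (g1 0) y + L1 / 2 * (norm y)\<^sup>2)
        - (f2 0 + inner (g2 0) y + L2 / 2 * (norm y)\<^sup>2) \<le> r"
      by linarith
    moreover have "c + inner (- (g1 0 + g2 0)) y - (L1 + L2) / 2 * (norm y)\<^sup>2
        = f1 x + f2 x + m - (f1 0 + inner (g1 0) y + L1 / 2 * (norm y)\<^sup>2)
          - (f2 0 + inner (g2 0) y + L2 / 2 * (norm y)\<^sup>2)"
      unfolding c_def by (simp add: inner_add_left algebra_simps)
    ultimately show ?thesis using real by simp
  qed (use ninf in auto)
  then show ?thesis by (rule that)
qed

theorem proposition2:
  fixes f1 f2 :: "'a::euclidean_space \<Rightarrow> real"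
    and g1 g2 :: "'a \<Rightarrow> 'a"
    and f3 :: "'a \<Rightarrow> ereal"
    and L1 L2 \<alpha> \<gamma> :: real
  assumes "convex_on UNIV f1" and "convex_on UNIV f2"
    and "\<And>x. (f1 has_derivative (\<lambda>h. inner (g1 x) h)) (at x)"
    and "\<And>x. (f2 has_derivative (\<lambda>h. inner (g2 x) h)) (at x)"
    and "L1 > 0" and "L2 > 0"
    and "L1-lipschitz_on UNIV g1" and "L2-lipschitz_on UNIV g2"
    and "proper_ereal f3" and "lsc_ereal f3"
    and "\<exists>x. \<forall>y. ereal (f1 x) + ereal (f2 x) + f3 x \<le> ereal (f1 y) + ereal (f2 y) + f3 y"
    and "\<alpha> > 0" and "\<gamma> > 0" and "\<gamma> < 1 / (L1 + L2)"
  shows "(\<forall>z1 z2. \<bar>ryu_envelope f1 g1 f2 g2 f3 \<alpha> \<gamma> z1 z2\<bar> \<noteq> \<infinity>)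
    \<and> locally_lipschitz (\<lambda>(z1, z2). real_of_ereal (ryu_envelope f1 g1 f2 g2 f3 \<alpha> \<gamma> z1 z2))"
proof -
  obtain c u where minorant: "\<And>y. ereal (c + inner u y - (L1 + L2) / 2 * (norm y)\<^sup>2) \<le> f3 y"
    using sum_minimizer_quadratic_minorant[OF assms(3,4,7,8,9)] assms(11) by metis
  obtain y0 where y0: "f3 y0 \<noteq> \<infinity>" using assms(9) unfolding proper_ereal_def by blast
  have K: "(L1 + L2) / 2 < 1 / (2 * \<gamma>)" using assms(5,6,13,14) by (simp add: field_simps)
  note envelope_finite = quadratic_envelope_finite[OF minorant y0 K]
  obtain W V where W: "lipschitz_on_bounded_sets W" and V: "lipschitz_on_bounded_sets V"
    and ryu: "\<And>z1 z2. ryu_envelope f1 g1 f2 g2 f3 \<alpha> \<gamma> z1 z2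
      = ereal (W (z1, z2)) + quadratic_envelope f3 (1 / (2 * \<gamma>)) (V (z1, z2))"
    using ryu_envelope_decomposition[OF assms(1-4,7,8,12,13)] by metis
  have finite: "\<bar>ryu_envelope f1 g1 f2 g2 f3 \<alpha> \<gamma> z1 z2\<bar> \<noteq> \<infinity>" for z1 z2
    using envelope_finite[of "V (z1, z2)"] unfolding ryu
    by (cases "quadratic_envelope f3 (1 / (2 * \<gamma>)) (V (z1, z2))") auto
  have "(\<lambda>(z1, z2). real_of_ereal (ryu_envelope f1 g1 f2 g2 f3 \<alpha> \<gamma> z1 z2))
      = (\<lambda>w. W w + real_of_ereal (quadratic_envelope f3 (1 / (2 * \<gamma>)) (V w)))"
    using envelope_finite by (auto simp: ryu real_of_ereal_add)
  moreover have "lipschitz_on_bounded_sets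
      (\<lambda>w. W w + real_of_ereal (quadratic_envelope f3 (1 / (2 * \<gamma>)) (V w)))"
    by (intro lipschitz_on_bounded_sets_add W lipschitz_on_bounded_sets_compose[OF V]
        lipschitz_on_bounded_sets_quadratic_envelope[OF minorant y0 K])
  ultimately show ?thesis
    using finite by (simp add: lipschitz_on_bounded_sets_imp_locally_lipschitz)
qed

end
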